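(* Let $(u,x)\in\mathrm{Bur}_n$ and $(v,y)\in\mathrm{Bur}_k$. Then $(v,y)\le(u,x)$ if and only if $(v,y)^T\le(u,x)^T$.
   Context: $\mathrm{Cay}_n$ is the set of Cayley permutations of length $n$ (words of positive integers in which every integer from $1$ to the maximum occurs), $\mathrm{WI}_n$ its weakly increasing elements. A pair $(u,v)\in\mathrm{WI}_n\times\mathrm{Cay}_n$ is a biword with columns $\binom{u(i)}{v(i)}$. The Burge transpose $(u,v)^T$ turns every column $\binom{a}{b}$ into $\binom{b}{a}$ and sorts the columns increasingly by top entry, ties by decreasing bottom entry. With $\mathrm{Des}(v)=\{i:v(i)\ge v(i+1)\}$, $\mathrm{Bur}_n=\{(u,v)\in\mathrm{WI}_n\times\mathrm{Cay}_n:\mathrm{Des}(u)\subseteq\mathrm{Des}(v)\}$; $T$ maps $\mathrm{Bur}_n$ to itself. Two words $a,b$ of the same length $k$ are order isomorphic if $a(s)<a(t)\iff b(s)<b(t)$ and $a(s)=a(t)\iff b(s)=b(t)$. For $(u',v')\in\mathrm{Bur}_k$, $(u,v)\in\mathrm{Bur}_n$: $(u',v')\le(u,v)$ iff there are indices $i_1<\dots<i_k$ such that $u(i_1)\cdots u(i_k)$ is order isomorphic to $u'$ and $v(i_1)\cdots v(i_k)$ is order isomorphic to $v'$. *)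

theory Defs
  imports Main "HOL-Library.Product_Lexorder"
begin

text \<open>Words of positive integers are modelled as lists of naturals; positions are 0-indexed.\<close>

definition cayley :: "nat list \<Rightarrow> bool" where
  "cayley w \<longleftrightarrow> (\<forall>a\<in>set w. 1 \<le> a \<and> (\<forall>b. 1 \<le> b \<and> b \<le> a \<longrightarrow> b \<in> set w))"

definition Cay :: "nat \<Rightarrow> nat list set" where
  "Cay n = {w. length w = n \<and> cayley w}"

definition WI :: "nat \<Rightarrow> nat list set" where
  "WI n = {w. w \<in> Cay n \<and> sorted w}"

definition Des :: "nat list \<Rightarrow> nat set" where
  "Des v = {i. Suc i < length v \<and> v ! i \<ge> v ! Suc i}"

definition Bur :: "nat \<Rightarrow> (nat list \<times> nat list) set" where
  "Bur n = {(u, v). u \<in> WI n \<and> v \<in> Cay n \<and> Des u \<subseteq> Des v}"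

definition burge_transpose :: "nat list \<times> nat list \<Rightarrow> nat list \<times> nat list" where
  "burge_transpose p =
     (let cols = sort_key (\<lambda>(a, b). (a, - int b)) (zip (snd p) (fst p))
      in (map fst cols, map snd cols))"

definition order_iso :: "nat list \<Rightarrow> nat list \<Rightarrow> bool" where
  "order_iso a b \<longleftrightarrow> length a = length b \<and>
     (\<forall>s < length a. \<forall>t < length a.
        (a ! s < a ! t \<longleftrightarrow> b ! s < b ! t) \<and> (a ! s = a ! t \<longleftrightarrow> b ! s = b ! t))"

definition bw_contained :: "nat list \<times> nat list \<Rightarrow> nat list \<times> nat list \<Rightarrow> bool" where
  "bw_contained p q \<longleftrightarrow>
     (\<exists>idx :: nat list. length idx = length (fst p) \<and> sorted_wrt (<) idx \<and>
        (\<forall>j\<in>set idx. j < length (fst q)) \<and>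
        order_iso (map (\<lambda>j. fst q ! j) idx) (fst p) \<and>
        order_iso (map (\<lambda>j. snd q ! j) idx) (snd p))"

end

theory Submission
  imports Defs "HOL-Library.Sublist" "HOL-Library.Multiset"
begin

text \<open>Read a biword as its list of columns. Then (v,y) \<le> (u,x) says that some subsequence of
  the columns of (u,x) arises from the columns of (v,y) by applying a strictly increasing
  relabelling to the top entries and another one to the bottom entries. The Burge transpose swaps
  every column and sorts by the key (top, - bottom). Sorting a sub-multiset of a sorted list gives
  a subsequence of it, and swapped monotone relabellings preserve the sort key order, so they
  commute with the sort; hence containment is carried over to the transposes. For elements of
  Bur the columns are already sorted by that key, because Des u \<subseteq> Des x makes the
  bottom entries weakly decrease within each block of equal top entries. So the transpose is an
  involution on Bur, and the converse follows by transposing once more.\<close>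

lemma nths_eq_map_nth_filter: "nths xs A = map ((!) xs) (filter (\<lambda>i. i \<in> A) [0..<length xs])"
proof -
  let ?zs = "zip xs [0..<length xs]"
  have "filter (\<lambda>i. i \<in> A) [0..<length xs] = filter (\<lambda>i. i \<in> A) (map snd ?zs)"
    by simp
  also have "\<dots> = map snd (filter (\<lambda>p. snd p \<in> A) ?zs)"
    by (simp only: filter_map comp_def)
  finally show ?thesis
    by (auto simp: nths_def set_zip intro!: map_cong)
qed

lemma subseq_upt_if_sorted:
  assumes "sorted_wrt (<) idx" "set idx \<subseteq> {..<n}"
  shows "subseq idx [0..<n]"
proof -
  have "sorted_wrt (<) (filter (\<lambda>i. i \<in> set idx) [0..<n])"
    by (simp add: sorted_wrt_filter)
  then have "filter (\<lambda>i. i \<in> set idx) [0..<n] = idx"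
    using assms by (intro sorted_distinct_set_unique) (auto simp: strict_sorted_iff)
  then show ?thesis by (metis subseq_filter_left)
qed

lemma subseq_iff_map_nth:
  "subseq xs ys \<longleftrightarrow> (\<exists>idx. sorted_wrt (<) idx \<and> set idx \<subseteq> {..<length ys} \<and> xs = map ((!) ys) idx)"
proof
  assume "subseq xs ys"
  then obtain A where "xs = nths ys A" by (auto simp: subseq_conv_nths)
  then show "\<exists>idx. sorted_wrt (<) idx \<and> set idx \<subseteq> {..<length ys} \<and> xs = map ((!) ys) idx"
    by (intro exI[of _ "filter (\<lambda>i. i \<in> A) [0..<length ys]"])
       (auto simp: nths_eq_map_nth_filter sorted_wrt_filter)
next
  assume "\<exists>idx. sorted_wrt (<) idx \<and> set idx \<subseteq> {..<length ys} \<and> xs = map ((!) ys) idx"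
  then obtain idx where "sorted_wrt (<) idx" "set idx \<subseteq> {..<length ys}" "xs = map ((!) ys) idx"
    by blast
  then show "subseq xs ys"
    using subseq_map[OF subseq_upt_if_sorted] by (metis map_nth)
qed

lemma subset_mset_if_subseq: "subseq xs ys \<Longrightarrow> mset xs \<subseteq># mset ys"
  by (induction rule: list_emb.induct) (auto intro: subset_mset.order_trans)

lemma subseq_sort_key_if_subset_mset:
  assumes "sorted (map k ys)" and "inj_on k (set ys)" and "mset xs \<subseteq># mset ys"
  shows "subseq (sort_key k xs) ys"
  using assms
proof (induction ys arbitrary: xs)
  case Nil
  then show ?case by simp
next
  case (Cons y ys)
  show ?case
  proof (cases "y \<in> set xs")
    case True
    have "set xs \<subseteq> set (y # ys)"
      using Cons.prems(3) by (metis set_mset_mono set_mset_mset)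
    then have "sort_key k xs = sort_key k (y # remove1 y xs)"
      using True Cons.prems(2) by (intro sort_key_eq_sort_key) (auto intro: inj_on_subset)
    also have "\<dots> = insort_key k y (sort_key k (remove1 y xs))"
      by simp
    also have "\<dots> = y # sort_key k (remove1 y xs)"
    proof (rule insort_is_Cons, rule ballI)
      fix z assume "z \<in> set (sort_key k (remove1 y xs))"
      then have "z \<in> set (y # ys)"
        using \<open>set xs \<subseteq> set (y # ys)\<close> set_remove1_subset by fastforce
      then show "k y \<le> k z"
        using Cons.prems(1) by auto
    qed
    finally have "sort_key k xs = y # sort_key k (remove1 y xs)" .
    moreover have "mset (remove1 y xs) \<subseteq># mset ys"
      using True Cons.prems(3)
      by (metis insert_DiffM mset.simps(2) mset_remove1 mset_subset_eq_add_mset_cancel set_mset_mset)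
    ultimately show ?thesis
      using Cons by (auto intro: subseq_Cons2)
  next
    case False
    then have "mset xs \<subseteq># mset ys"
      using Cons.prems(3)
      by (metis Diff_eq_empty_iff_mset minus_add_mset_if_not_in_lhs mset.simps(2) set_mset_mset)
    then show ?thesis
      using Cons by auto
  qed
qed

lemma sort_key_map_monotone:
  assumes "inj_on k (h ` set xs)"
    and "\<And>p q. p \<in> set xs \<Longrightarrow> q \<in> set xs \<Longrightarrow> k p \<le> k q \<Longrightarrow> k (h p) \<le> k (h q)"
  shows "sort_key k (map h xs) = map h (sort_key k xs)"
proof (rule sort_key_inj_key_eq)
  have "sorted_wrt (\<lambda>p q. k p \<le> k q) (sort_key k xs)"
    using sorted_sort_key[of k xs] by (simp add: sorted_wrt_map)
  then have "sorted_wrt (\<lambda>p q. k (h p) \<le> k (h q)) (sort_key k xs)"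
    by (rule sorted_wrt_mono_rel[rotated]) (simp add: assms(2))
  then show "sorted (map k (map h (sort_key k xs)))"
    by (simp add: sorted_wrt_map)
qed (use assms(1) in simp_all)

lemma order_iso_map_strict_mono_on: "strict_mono_on (set xs) f \<Longrightarrow> order_iso (map f xs) xs"
  unfolding order_iso_def by (auto simp: strict_mono_on_less strict_mono_on_eq)

lemma order_iso_iff_strict_mono_on:
  "order_iso ys xs \<longleftrightarrow> (\<exists>f. strict_mono_on (set xs) f \<and> ys = map f xs)"
proof
  assume iso: "order_iso ys xs"
  define f where "f z = ys ! (SOME i. i < length xs \<and> xs ! i = z)" for z
  have f_nth: "f (xs ! i) = ys ! i" if "i < length xs" for i
  proof -
    have "(SOME j. j < length xs \<and> xs ! j = xs ! i) < length xs \<and>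
          xs ! (SOME j. j < length xs \<and> xs ! j = xs ! i) = xs ! i"
      by (rule someI[of _ i]) (simp add: that)
    then show ?thesis
      using iso that unfolding f_def order_iso_def by metis
  qed
  have "strict_mono_on (set xs) f"
  proof (rule strict_mono_onI)
    fix r s assume "r \<in> set xs" "s \<in> set xs" "r < s"
    then obtain i j where "i < length xs" "j < length xs" "r = xs ! i" "s = xs ! j"
      by (metis in_set_conv_nth)
    then show "f r < f s"
      using iso f_nth \<open>r < s\<close> unfolding order_iso_def by metis
  qed
  moreover have "ys = map f xs"
    using iso f_nth unfolding order_iso_def by (auto intro: nth_equalityI)
  ultimately show "\<exists>f. strict_mono_on (set xs) f \<and> ys = map f xs"
    by blast
qed (use order_iso_map_strict_mono_on in blast)

definition columns :: "'a list \<times> 'b list \<Rightarrow> ('a \<times> 'b) list" where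
  "columns p = zip (fst p) (snd p)"

definition burge_key :: "nat \<times> nat \<Rightarrow> nat \<times> int" where
  "burge_key = (\<lambda>(a, b). (a, - int b))"

definition burge_sort :: "(nat \<times> nat) list \<Rightarrow> (nat \<times> nat) list" where
  "burge_sort cs = sort_key burge_key (map prod.swap cs)"

lemma inj_on_burge_key: "inj_on burge_key A"
  by (auto simp: burge_key_def inj_on_def)

lemma columns_burge_transpose: "columns (burge_transpose p) = burge_sort (columns p)"
proof -
  have "zip (snd p) (fst p) = map prod.swap (columns p)"
    by (simp add: columns_def zip_commute[of "snd p"] prod.swap_def case_prod_beta)
  then show ?thesis
    by (simp add: burge_transpose_def burge_sort_def burge_key_def columns_def zip_map_fst_snd Let_def)
qed

lemma length_burge_transpose: "length (fst (burge_transpose p)) = length (snd (burge_transpose p))"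
  by (simp add: burge_transpose_def Let_def)

lemma columns_inject:
  assumes "length (fst p) = length (snd p)" and "length (fst q) = length (snd q)"
    and "columns p = columns q"
  shows "p = q"
  using assms unfolding columns_def by (metis map_fst_zip map_snd_zip prod_eq_iff)

lemma burge_sort_burge_sort: "burge_sort (burge_sort cs) = sort_key burge_key cs"
  unfolding burge_sort_def
  by (rule sort_key_eq_sort_key) (simp_all add: inj_on_burge_key multiset.map_comp)

lemma burge_transpose_burge_transpose:
  assumes "length (fst p) = length (snd p)" and "sorted (map burge_key (columns p))"
  shows "burge_transpose (burge_transpose p) = p"
  by (rule columns_inject)
     (simp_all add: assms length_burge_transpose columns_burge_transpose burge_sort_burge_sort
        sort_key_id_if_sorted)

lemma length_eq_if_Bur: "(u, x) \<in> Bur n \<Longrightarrow> length u = length x"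
  by (simp add: Bur_def WI_def Cay_def)

lemma sorted_burge_key_columns_if_Bur:
  assumes "(u, x) \<in> Bur n"
  shows "sorted (map burge_key (columns (u, x)))"
  unfolding sorted_wrt_iff_nth_Suc_transp[OF transp_on_le]
proof (intro allI impI)
  fix i assume i: "Suc i < length (map burge_key (columns (u, x)))"
  have "sorted u" and des: "Des u \<subseteq> Des x"
    using assms by (auto simp: Bur_def WI_def)
  then have "u ! i < u ! Suc i \<or> u ! i = u ! Suc i"
    using i by (auto simp: columns_def sorted_iff_nth_mono order.order_iff_strict)
  then show "map burge_key (columns (u, x)) ! i \<le> map burge_key (columns (u, x)) ! Suc i"
  proof
    assume "u ! i = u ! Suc i"
    then have "x ! Suc i \<le> x ! i"
      using i des by (auto simp: Des_def columns_def)
    then show ?thesis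
      using \<open>u ! i = u ! Suc i\<close> i by (simp add: burge_key_def columns_def)
  qed (use i in \<open>simp add: burge_key_def columns_def\<close>)
qed

lemma subseq_burge_sort: "subseq cs ds \<Longrightarrow> subseq (burge_sort cs) (burge_sort ds)"
  unfolding burge_sort_def
  by (intro subseq_sort_key_if_subset_mset)
     (auto simp: inj_on_burge_key image_mset_subseteq_mono subset_mset_if_subseq)

lemma burge_sort_map_prod:
  assumes f: "strict_mono_on (fst ` set cs) f" and g: "strict_mono_on (snd ` set cs) g"
  shows "burge_sort (map (map_prod f g) cs) = map (map_prod g f) (burge_sort cs)"
proof -
  have swap_map_prod: "map prod.swap (map (map_prod f g) cs) = map (map_prod g f) (map prod.swap cs)"
    by (induction cs) auto
  have "burge_sort (map (map_prod f g) cs) = sort_key burge_key (map (map_prod g f) (map prod.swap cs))"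
    unfolding burge_sort_def swap_map_prod ..
  also have "\<dots> = map (map_prod g f) (burge_sort cs)"
    unfolding burge_sort_def
  proof (rule sort_key_map_monotone)
    fix p q assume "p \<in> set (map prod.swap cs)" "q \<in> set (map prod.swap cs)"
      and le: "burge_key p \<le> burge_key q"
    then obtain a b a' b' where pq: "p = (a, b)" "q = (a', b')"
      and mem: "a \<in> snd ` set cs" "a' \<in> snd ` set cs" "b \<in> fst ` set cs" "b' \<in> fst ` set cs"
      by force
    from le pq have "a < a' \<or> (a = a' \<and> b' \<le> b)"
      by (auto simp: burge_key_def)
    then have "g a < g a' \<or> (g a = g a' \<and> f b' \<le> f b)"
      using mem strict_mono_onD[OF g] strict_mono_on_leD[OF f] by blast
    then show "burge_key (map_prod g f p) \<le> burge_key (map_prod g f q)"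
      using pq by (auto simp: burge_key_def)
  qed (rule inj_on_burge_key)
  finally show ?thesis .
qed

definition order_iso_columns :: "(nat \<times> nat) list \<Rightarrow> (nat \<times> nat) list \<Rightarrow> bool" where
  "order_iso_columns cs ds \<longleftrightarrow>
     (\<exists>f g. strict_mono_on (fst ` set ds) f \<and> strict_mono_on (snd ` set ds) g \<and>
        cs = map (map_prod f g) ds)"

lemma order_iso_columns_iff:
  assumes "length (fst p) = length (snd p)"
  shows "order_iso_columns cs (columns p) \<longleftrightarrow>
    order_iso (map fst cs) (fst p) \<and> order_iso (map snd cs) (snd p)"
proof -
  have rows: "fst ` set (columns p) = set (fst p)" "snd ` set (columns p) = set (snd p)"
    using assms by (simp_all add: columns_def flip: set_map)
  have "cs = map (map_prod f g) (columns p) \<longleftrightarrow> map fst cs = map f (fst p) \<and> map snd cs = map g (snd p)"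
    for f g
  proof -
    have "map (map_prod f g) (columns p) = zip (map f (fst p)) (map g (snd p))"
      by (simp add: columns_def zip_map_map map_prod_def)
    then show ?thesis
      using assms by (metis length_map map_fst_zip map_snd_zip zip_map_fst_snd)
  qed
  then show ?thesis
    unfolding order_iso_columns_def order_iso_iff_strict_mono_on rows by blast
qed

lemma bw_contained_iff_subseq_columns:
  assumes "length (fst p) = length (snd p)" and "length (fst q) = length (snd q)"
  shows "bw_contained p q \<longleftrightarrow> (\<exists>cs. subseq cs (columns q) \<and> order_iso_columns cs (columns p))"
    (is "_ \<longleftrightarrow> (\<exists>cs. ?sub cs)")
proof -
  have len: "length (columns q) = length (fst q)"
    using assms(2) by (simp add: columns_def)
  have rows: "map fst (map ((!) (columns q)) idx) = map ((!) (fst q)) idx"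
    "map snd (map ((!) (columns q)) idx) = map ((!) (snd q)) idx"
    if "set idx \<subseteq> {..<length (fst q)}" for idx
    using that assms(2) by (auto simp: columns_def)
  show ?thesis
  proof
    assume "bw_contained p q"
    then obtain idx where idx: "sorted_wrt (<) idx" "set idx \<subseteq> {..<length (fst q)}"
      and iso: "order_iso (map ((!) (fst q)) idx) (fst p)" "order_iso (map ((!) (snd q)) idx) (snd p)"
      unfolding bw_contained_def by auto
    then have "?sub (map ((!) (columns q)) idx)"
      unfolding subseq_iff_map_nth order_iso_columns_iff[OF assms(1)] rows[OF idx(2)] len
      by blast
    then show "\<exists>cs. ?sub cs" ..
  next
    assume "\<exists>cs. ?sub cs"
    then obtain idx where idx: "sorted_wrt (<) idx" "set idx \<subseteq> {..<length (fst q)}"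
      and iso: "order_iso (map fst (map ((!) (columns q)) idx)) (fst p)"
        "order_iso (map snd (map ((!) (columns q)) idx)) (snd p)"
      unfolding subseq_iff_map_nth order_iso_columns_iff[OF assms(1)] len by blast
    moreover have "length idx = length (fst p)"
      using iso(1) by (simp add: order_iso_def)
    ultimately show "bw_contained p q"
      unfolding bw_contained_def rows[OF idx(2)] by auto
  qed
qed

lemma order_iso_columns_burge_sort:
  assumes "order_iso_columns cs ds"
  shows "order_iso_columns (burge_sort cs) (burge_sort ds)"
proof -
  obtain f g where f: "strict_mono_on (fst ` set ds) f" and g: "strict_mono_on (snd ` set ds) g"
    and cs: "cs = map (map_prod f g) ds"
    using assms unfolding order_iso_columns_def by blast
  have "fst ` set (burge_sort ds) = snd ` set ds" "snd ` set (burge_sort ds) = fst ` set ds"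
    by (force simp: burge_sort_def)+
  then show ?thesis
    unfolding order_iso_columns_def cs burge_sort_map_prod[OF f g] using f g by metis
qed

lemma bw_contained_burge_transpose:
  assumes "length (fst p) = length (snd p)" and "length (fst q) = length (snd q)"
    and "bw_contained p q"
  shows "bw_contained (burge_transpose p) (burge_transpose q)"
proof -
  obtain cs where "subseq cs (columns q)" and "order_iso_columns cs (columns p)"
    using assms bw_contained_iff_subseq_columns by blast
  then have "subseq (burge_sort cs) (columns (burge_transpose q))"
    and "order_iso_columns (burge_sort cs) (columns (burge_transpose p))"
    by (simp_all add: columns_burge_transpose subseq_burge_sort order_iso_columns_burge_sort)
  then show ?thesis
    using bw_contained_iff_subseq_columns length_burge_transpose by blast
qed

theorem lemma4p6:
  fixes u x v y :: "nat list" and n k :: nat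
  assumes "(u, x) \<in> Bur n" and "(v, y) \<in> Bur k"
  shows "bw_contained (v, y) (u, x) \<longleftrightarrow>
         bw_contained (burge_transpose (v, y)) (burge_transpose (u, x))"
proof
  have lengths: "length u = length x" "length v = length y"
    using assms by (simp_all add: length_eq_if_Bur)
  then show "bw_contained (v, y) (u, x) \<Longrightarrow>
      bw_contained (burge_transpose (v, y)) (burge_transpose (u, x))"
    by (simp add: bw_contained_burge_transpose)
  assume "bw_contained (burge_transpose (v, y)) (burge_transpose (u, x))"
  then have "bw_contained (burge_transpose (burge_transpose (v, y)))
      (burge_transpose (burge_transpose (u, x)))"
    by (simp add: bw_contained_burge_transpose length_burge_transpose)
  then show "bw_contained (v, y) (u, x)"
    using assms lengths
    by (simp add: burge_transpose_burge_transpose sorted_burge_key_columns_if_Bur)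
qed

end
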